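(* In the setting below, suppose $\mathbb{E}(m_0-\tilde m_0)=M_0$. Then for every $t\ge1$, $$\mathbb{E}(m_t-\tilde m_t)=\Big(\prod_{i=0}^{t-1}A_{t-i}\Big)M_0+\sum_{i=0}^{t-2}\Big(\prod_{j=0}^{i}A_{t-j}\Big)C_{t-1-i}+C_t,$$ where $A_t=F-\tilde K_tHF$, $C_t=-\tilde K_t\epsilon_t$, and $\prod_{j=0}^{i}A_{t-j}=A_tA_{t-1}\cdots A_{t-i}$.
   Context: Let $F,B,H,R,Q\in\mathbb{R}^{2\times2}$. Target motion: $x_{t+1}=Fx_t+Bu_t+w_t$, $w_t\sim\mathcal{N}(0,R)$; measurement $z_t=Hx_t+v_t$, $v_t\sim\mathcal{N}(0,Q)$; spoofed measurement $\tilde z_t=z_t+\epsilon_t$ with deterministic spoofing signals $\epsilon_t\in\mathbb{R}^2$ and deterministic controls $u_t$. Kalman filter: from initial $(m_0,\Sigma_0)$ and measurements $y_t$, $\Sigma_{t|t-1}=F\Sigma_{t-1}F^T+R$, $K_t=\Sigma_{t|t-1}H^T(H\Sigma_{t|t-1}H^T+Q)^{-1}$, $\Sigma_t=(I-K_tH)\Sigma_{t|t-1}$, $m_t=(I-K_tH)(Fm_{t-1}+Bu_{t-1})+K_ty_t$; the gains depend only on the (deterministic) initial covariance and model matrices. $(m_t,K_t)$ come from the filter with initial $(m_0,\Sigma_0)$ fed $z_t$; $(\tilde m_t,\tilde K_t)$ from the filter with initial $(\tilde m_0,\tilde\Sigma_0)$ fed $\tilde z_t$. As in the paper, the measurement is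 modeled relative to the filter estimate as $z_t=H(Fm_{t-1}+Bu_{t-1}+w_t)+v_t$ with zero-mean noises $w_t,v_t$, so that $\mathbb{E}[z_t-H(Fm_{t-1}+Bu_{t-1})]=0$. *)

theory Defs
  imports "HOL-Probability.Probability"
begin

type_synonym mat2 = "real^2^2"
type_synonym vec2 = "real^2"

definition pred_cov :: "mat2 \<Rightarrow> mat2 \<Rightarrow> mat2 \<Rightarrow> mat2" where
  "pred_cov F R S = F ** S ** transpose F + R"

definition kgain :: "mat2 \<Rightarrow> mat2 \<Rightarrow> mat2 \<Rightarrow> mat2 \<Rightarrow> mat2 \<Rightarrow> mat2" where
  "kgain F R H Q S =
     pred_cov F R S ** transpose H ** matrix_inv (H ** pred_cov F R S ** transpose H + Q)"

fun kf_cov :: "mat2 \<Rightarrow> mat2 \<Rightarrow> mat2 \<Rightarrow> mat2 \<Rightarrow> mat2 \<Rightarrow> nat \<Rightarrow> mat2" where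
  "kf_cov F R H Q S0 0 = S0"
| "kf_cov F R H Q S0 (Suc t) =
     (mat 1 - kgain F R H Q (kf_cov F R H Q S0 t) ** H) ** pred_cov F R (kf_cov F R H Q S0 t)"

text \<open>Gain K_t (meaningful for t \<ge> 1), from the filter with initial covariance S0.\<close>
definition kf_gain :: "mat2 \<Rightarrow> mat2 \<Rightarrow> mat2 \<Rightarrow> mat2 \<Rightarrow> mat2 \<Rightarrow> nat \<Rightarrow> mat2" where
  "kf_gain F R H Q S0 t = kgain F R H Q (kf_cov F R H Q S0 (t - 1))"

definition mat_list_prod :: "mat2 list \<Rightarrow> mat2" where
  "mat_list_prod Ms = foldr (**) Ms (mat 1)"

end

theory Submission
  imports Defs
begin

text \<open>The two filters see the same measurement noise, so their estimation gap
  d_t = m_t - m'_t obeys the affine recursion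
  d_t = A_t d_(t-1) + (K_t - K'_t)(H w_t + v_t) + C_t.
  The noise term has mean zero, so the means D_t of the gap satisfy the deterministic
  recursion D_t = A_t D_(t-1) + C_t, whose unrolling is the stated formula.\<close>

lemma mat_list_prod_Cons: "mat_list_prod (A # As) = A ** mat_list_prod As"
  by (simp add: mat_list_prod_def)

lemma affine_recurrence_closed_form:
  fixes D C :: "nat \<Rightarrow> vec2" and A :: "nat \<Rightarrow> mat2"
  assumes D0: "D 0 = D\<^sub>0"
    and D_Suc: "\<And>s. D (Suc s) = A (Suc s) *v D s + C (Suc s)"
  shows "D (Suc n) = mat_list_prod (map (\<lambda>i. A (Suc n - i)) [0..<Suc n]) *v D\<^sub>0
     + (\<Sum>i<n. mat_list_prod (map (\<lambda>j. A (Suc n - j)) [0..<Suc i]) *v C (n - i))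
     + C (Suc n)"
proof (induction n)
  case 0
  then show ?case using D0 D_Suc[of 0] by (simp add: mat_list_prod_def)
next
  case (Suc n)
  have prefix: "map (\<lambda>i. A (Suc (Suc n) - i)) [0..<Suc k]
      = A (Suc (Suc n)) # map (\<lambda>i. A (Suc n - i)) [0..<k]" for k
    by (simp only: map_upt_Suc) simp
  have "(\<Sum>i<Suc n. mat_list_prod (map (\<lambda>j. A (Suc (Suc n) - j)) [0..<Suc i]) *v C (Suc n - i))
      = mat_list_prod (map (\<lambda>j. A (Suc (Suc n) - j)) [0..<Suc 0]) *v C (Suc n - 0)
        + (\<Sum>i<n. mat_list_prod (map (\<lambda>j. A (Suc (Suc n) - j)) [0..<Suc (Suc i)]) *v C (Suc n - Suc i))"
    by (rule sum.lessThan_Suc_shift)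
  also have "\<dots> = A (Suc (Suc n)) *v C (Suc n)
      + (\<Sum>i<n. A (Suc (Suc n)) *v (mat_list_prod (map (\<lambda>j. A (Suc n - j)) [0..<Suc i]) *v C (n - i)))"
    by (simp only: prefix mat_list_prod_Cons matrix_vector_mul_assoc[symmetric] diff_Suc_Suc diff_zero)
       (simp add: mat_list_prod_def del: upt_Suc)
  finally have sum_split:
    "(\<Sum>i<Suc n. mat_list_prod (map (\<lambda>j. A (Suc (Suc n) - j)) [0..<Suc i]) *v C (Suc n - i))
      = A (Suc (Suc n)) *v C (Suc n)
      + A (Suc (Suc n)) *v (\<Sum>i<n. mat_list_prod (map (\<lambda>j. A (Suc n - j)) [0..<Suc i]) *v C (n - i))"
    by (simp add: vec.sum del: upt_Suc)
  show ?case
    by (subst D_Suc, subst Suc, subst sum_split)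
       (simp only: prefix mat_list_prod_Cons matrix_vector_mul_assoc[symmetric]
          matrix_vector_right_distrib add_ac)
qed

lemma kalman_update_gap:
  fixes F H K K' :: "real^'n^'n" and x x' b w v e :: "real^'n"
  shows "((mat 1 - K ** H) *v (F *v x + b) + K *v (H *v (F *v x + b + w) + v))
       - ((mat 1 - K' ** H) *v (F *v x' + b) + K' *v (H *v (F *v x + b + w) + v + e))
       = (F - K' ** H ** F) *v (x - x') + (K - K') *v (H *v w + v) - K' *v e"
  by (simp add: matrix_vector_mult_diff_rdistrib matrix_vector_mul_assoc[symmetric]
      matrix_vector_mult_diff_distrib matrix_vector_right_distrib algebra_simps)

lemma (in prob_space) centered_linear_noise:
  fixes G H :: "real^'n^'n" and w v :: "'a \<Rightarrow> real^'n"
  assumes "integrable M w" "integrable M v" "expectation w = 0" "expectation v = 0"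
  shows "integrable M (\<lambda>x. G *v (H *v w x + v x))"
    and "expectation (\<lambda>x. G *v (H *v w x + v x)) = 0"
proof -
  have sum_int: "integrable M (\<lambda>x. H *v w x + v x)"
    using assms by (intro Bochner_Integration.integrable_add integrable_bounded_linear[where T="(*v) H"]) auto
  have "expectation (\<lambda>x. H *v w x + v x) = 0"
    using assms by (simp add: integrable_bounded_linear[where T="(*v) H"] integral_bounded_linear[where T="(*v) H"])
  with sum_int show "integrable M (\<lambda>x. G *v (H *v w x + v x))"
      and "expectation (\<lambda>x. G *v (H *v w x + v x)) = 0"
    by (auto intro: integrable_bounded_linear[where T="(*v) G"]
        simp: integral_bounded_linear[where T="(*v) G"])
qed

lemma (in prob_space) expectation_affine_step:
  fixes A :: "real^'n^'n" and f n :: "'a \<Rightarrow> real^'n"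
  assumes f: "integrable M f" and n: "integrable M n" "expectation n = 0"
  shows "integrable M (\<lambda>x. A *v f x + n x + c)"
    and "expectation (\<lambda>x. A *v f x + n x + c) = A *v expectation f + c"
proof -
  have Af: "integrable M (\<lambda>x. A *v f x)"
    using f by (rule integrable_bounded_linear[rotated]) simp
  then show "integrable M (\<lambda>x. A *v f x + n x + c)"
    using n by simp
  show "expectation (\<lambda>x. A *v f x + n x + c) = A *v expectation f + c"
    using Af f n by (simp add: integral_bounded_linear prob_space)
qed

theorem corollary1:
  fixes M :: "'s measure"
    and F B H R Q S0 S0' :: mat2
    and u eps :: "nat \<Rightarrow> vec2"
    and w v :: "nat \<Rightarrow> 's \<Rightarrow> vec2"
    and z m m' :: "nat \<Rightarrow> 's \<Rightarrow> vec2"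
    and M0 :: vec2
    and t :: nat
  assumes "prob_space M"
    and w_int: "\<And>s. integrable M (w s)" and w_mean: "\<And>s. integral\<^sup>L M (w s) = 0"
    and v_int: "\<And>s. integrable M (v s)" and v_mean: "\<And>s. integral\<^sup>L M (v s) = 0"
    and m0_int: "integrable M (m 0)" and m0'_int: "integrable M (m' 0)"
    and z_def: "\<And>s x. z (Suc s) x =
                  H *v (F *v m s x + B *v u s + w (Suc s) x) + v (Suc s) x"
    and m_step: "\<And>s x. m (Suc s) x =
                  (mat 1 - kf_gain F R H Q S0 (Suc s) ** H) *v (F *v m s x + B *v u s)
                  + kf_gain F R H Q S0 (Suc s) *v z (Suc s) x"
    and m'_step: "\<And>s x. m' (Suc s) x =
                  (mat 1 - kf_gain F R H Q S0' (Suc s) ** H) *v (F *v m' s x + B *v u s)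
                  + kf_gain F R H Q S0' (Suc s) *v (z (Suc s) x + eps (Suc s))"
    and M0_def: "integral\<^sup>L M (\<lambda>x. m 0 x - m' 0 x) = M0"
    and t_ge: "t \<ge> 1"
  shows "integral\<^sup>L M (\<lambda>x. m t x - m' t x) =
           mat_list_prod (map (\<lambda>i. F - kf_gain F R H Q S0' (t - i) ** H ** F) [0..<t]) *v M0
         + (\<Sum>i<t - 1. mat_list_prod (map (\<lambda>j. F - kf_gain F R H Q S0' (t - j) ** H ** F) [0..<Suc i])
                        *v (- (kf_gain F R H Q S0' (t - 1 - i) *v eps (t - 1 - i))))
         + (- (kf_gain F R H Q S0' t *v eps t))"
proof -
  interpret prob_space M by fact
  define K where "K = kf_gain F R H Q S0"
  define K' where "K' = kf_gain F R H Q S0'"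
  define A where "A s = F - K' s ** H ** F" for s
  define C where "C s = - (K' s *v eps s)" for s
  define noise where "noise s x = (K s - K' s) *v (H *v w s x + v s x)" for s x
  define d where "d s x = m s x - m' s x" for s x
  have "d (Suc s) x = A (Suc s) *v d s x + noise (Suc s) x + C (Suc s)" for s x
    unfolding d_def m_step m'_step z_def K_def K'_def A_def noise_def C_def
    by (simp add: kalman_update_gap)
  then have d_Suc: "d (Suc s) = (\<lambda>x. A (Suc s) *v d s x + noise (Suc s) x + C (Suc s))" for s
    by blast
  have noise_int: "integrable M (noise s)" and noise_mean: "expectation (noise s) = 0" for s
    unfolding noise_def using w_int v_int w_mean v_mean by (simp_all add: centered_linear_noise)
  have d_int: "integrable M (d s)" for s
  proof (induction s)
    case 0
    then show ?case using m0_int m0'_int by (simp add: d_def)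
  next
    case (Suc s)
    then show ?case
      unfolding d_Suc using expectation_affine_step(1) noise_int noise_mean by blast
  qed
  have mean_Suc: "expectation (d (Suc s)) = A (Suc s) *v expectation (d s) + C (Suc s)" for s
    unfolding d_Suc using expectation_affine_step(2) d_int noise_int noise_mean by blast
  obtain n where t: "t = Suc n" using t_ge by (cases t) auto
  have "expectation (d (Suc n)) = mat_list_prod (map (\<lambda>i. A (Suc n - i)) [0..<Suc n]) *v M0
     + (\<Sum>i<n. mat_list_prod (map (\<lambda>j. A (Suc n - j)) [0..<Suc i]) *v C (n - i))
     + C (Suc n)"
    using M0_def by (intro affine_recurrence_closed_form mean_Suc) (simp add: d_def)
  then show ?thesis unfolding d_def A_def C_def K'_def t by simp
qed

end
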